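(* There exists an absolute constant $C>0$ such that the following holds. Let $n\ge 1$, let $\varepsilon\ge 0$, let $\ell\ge 2$ be an integer that is a power of $2$, and let $z=(z_1,\dots,z_n)$ be a sample from an $\varepsilon$-biased $2\ell$-wise independent distribution on $\{-1,1\}^n$. Then for every symmetric matrix $B\in\mathbb{R}^{n\times n}$, \[ \mathbb{E}\left[\left(z^T B z-\operatorname{tr}(B)\right)^{\ell}\right]\le \varepsilon\,\|B\|_{L_1}^{\ell}+C^{\ell}\max\left\{\sqrt{\ell}\,\|B\|_{S_2},\ \ell\,\|B\|_2\right\}^{\ell}. \]
   Context: A distribution on $\{-1,1\}^n$ is $\varepsilon$-biased $m$-wise independent if, when $x=(x_1,\dots,x_n)$ is drawn from it, for every nonempty set $y\subseteq\{1,\dots,n\}$ with $|y|\le m$ one has $\left|\mathbb{E}\left[\prod_{i\in y}x_i\right]\right|\le\varepsilon$. For a matrix $A\in\mathbb{R}^{n\times n}$: $\|A\|_{L_1}=\sum_{i,j}|A_{i,j}|$; $\|A\|_2=\max_{\|x\|_2=1}\|Ax\|_2$ is the operator norm; $\|A\|_{S_2}=(\operatorname{tr}(AA^T))^{1/2}$ is the Frobenius norm. *)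

theory Defs
  imports "HOL-Probability.Probability"
begin

text \<open>Vectors in R^n are functions nat => real (only indices < n matter);
  n x n matrices are functions nat => nat => real (only indices < n matter).\<close>

definition hypercube :: "nat \<Rightarrow> (nat \<Rightarrow> real) set" where
  "hypercube n = {x. (\<forall>i<n. x i = -1 \<or> x i = 1) \<and> (\<forall>i\<ge>n. x i = 0)}"

definition eps_biased_indep :: "nat \<Rightarrow> real \<Rightarrow> nat \<Rightarrow> (nat \<Rightarrow> real) pmf \<Rightarrow> bool" where
  "eps_biased_indep n eps m D \<longleftrightarrow>
     set_pmf D \<subseteq> hypercube n \<and>
     (\<forall>y. y \<subseteq> {0..<n} \<and> y \<noteq> {} \<and> card y \<le> m \<longrightarrow>
        \<bar>measure_pmf.expectation D (\<lambda>x. \<Prod>i\<in>y. x i)\<bar> \<le> eps)"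

definition mat_L1 :: "nat \<Rightarrow> (nat \<Rightarrow> nat \<Rightarrow> real) \<Rightarrow> real" where
  "mat_L1 n A = (\<Sum>i<n. \<Sum>j<n. \<bar>A i j\<bar>)"

definition mat_frob :: "nat \<Rightarrow> (nat \<Rightarrow> nat \<Rightarrow> real) \<Rightarrow> real" where
  "mat_frob n A = sqrt (\<Sum>i<n. \<Sum>j<n. (A i j)\<^sup>2)"

definition vec_norm2 :: "nat \<Rightarrow> (nat \<Rightarrow> real) \<Rightarrow> real" where
  "vec_norm2 n x = sqrt (\<Sum>i<n. (x i)\<^sup>2)"

definition mat_vec :: "nat \<Rightarrow> (nat \<Rightarrow> nat \<Rightarrow> real) \<Rightarrow> (nat \<Rightarrow> real) \<Rightarrow> (nat \<Rightarrow> real)" where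
  "mat_vec n A x = (\<lambda>i. \<Sum>j<n. A i j * x j)"

definition mat_opnorm :: "nat \<Rightarrow> (nat \<Rightarrow> nat \<Rightarrow> real) \<Rightarrow> real" where
  "mat_opnorm n A = Sup {vec_norm2 n (mat_vec n A x) | x. vec_norm2 n x = 1}"

definition mat_trace :: "nat \<Rightarrow> (nat \<Rightarrow> nat \<Rightarrow> real) \<Rightarrow> real" where
  "mat_trace n A = (\<Sum>i<n. A i i)"

definition quad_form :: "nat \<Rightarrow> (nat \<Rightarrow> nat \<Rightarrow> real) \<Rightarrow> (nat \<Rightarrow> real) \<Rightarrow> real" where
  "quad_form n A z = (\<Sum>i<n. \<Sum>j<n. z i * A i j * z j)"

end

theory Submission
  imports Defs
begin

(*
  On the cube, z\<^sup>T B z - tr B = z\<^sup>T A z for the off-diagonal part A of B. Expanding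
  (z\<^sup>T A z)\<^sup>l gives monomials of degree at most 2l with coefficients of total mass
  \<parallel>A\<parallel>\<^sub>L\<^sub>1\<^sup>l, and each monomial has bias at most eps, so the l-th moment under D exceeds
  the uniform one by at most eps \<parallel>A\<parallel>\<^sub>L\<^sub>1\<^sup>l.

  The uniform moment obeys a Hanson-Wright bound, proved by induction on l = 2\<^sup>k. Stein's
  method for resampling one coordinate gives E (z\<^sup>T A z)\<^sup>2\<^sup>p \<le> (16p)\<^sup>p E \<parallel>Az\<parallel>\<^sup>2\<^sup>p, and on the cube
  \<parallel>Az\<parallel>\<^sup>2 = \<parallel>A\<parallel>\<^sub>F\<^sup>2 + z\<^sup>T A' z with A' = offdiag (A\<^sup>T A), a hollow matrix with
  \<parallel>A'\<parallel>\<^sub>F \<le> \<parallel>A\<parallel> \<parallel>A\<parallel>\<^sub>F and \<parallel>A'\<parallel> \<le> 2 \<parallel>A\<parallel>\<^sup>2, so the moment of order p of the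
  new chaos is covered by the induction hypothesis. Finally \<parallel>A\<parallel> \<le> 2 \<parallel>B\<parallel> and
  \<parallel>A\<parallel>\<^sub>F \<le> \<parallel>B\<parallel>\<^sub>F, which yields C = 32.
*)

lemma finite_hypercube: "finite (hypercube n)"
proof -
  have "hypercube n \<subseteq> (\<lambda>S i. if i \<in> S then 1 else if i < n then -1 else 0) ` Pow {..<n}"
  proof
    fix x assume x: "x \<in> hypercube n"
    show "x \<in> (\<lambda>S i. if i \<in> S then 1 else if i < n then -1 else (0::real)) ` Pow {..<n}"
    proof (rule image_eqI[where x="{i. i < n \<and> x i = 1}"])
      show "x = (\<lambda>i. if i \<in> {i. i < n \<and> x i = 1} then 1 else if i < n then -1 else 0)"
        using x unfolding hypercube_def by (force simp: fun_eq_iff)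
    qed auto
  qed
  then show ?thesis by (rule finite_subset) auto
qed

lemma card_hypercube_pos: "card (hypercube n) > 0"
proof -
  have "(\<lambda>i. if i < n then 1 else 0) \<in> hypercube n"
    unfolding hypercube_def by auto
  then show ?thesis using finite_hypercube card_gt_0_iff by blast
qed

lemma hypercube_square: "z \<in> hypercube n \<Longrightarrow> i < n \<Longrightarrow> z i * z i = 1"
  unfolding hypercube_def by auto

lemma power_eq_if_square_eq_1:
  fixes x :: "'a :: monoid_mult"
  assumes "x * x = 1"
  shows "x ^ m = (if even m then 1 else x)"
  by (induction m) (use assms in \<open>auto simp: mult.assoc\<close>)

text \<open>Flipping the \<open>i\<close>-th coordinate is a bijection of the cube.\<close>

lemma sum_hypercube_flip:
  fixes f :: "(nat \<Rightarrow> real) \<Rightarrow> real"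
  assumes "i < n"
  shows "(\<Sum>z\<in>hypercube n. f z) = (\<Sum>z\<in>hypercube n. (f (z(i:=1)) + f (z(i:=-1))) / 2)"
proof -
  let ?flip = "\<lambda>z::nat\<Rightarrow>real. z(i := - z i)"
  have flip: "?flip z \<in> hypercube n" if "z \<in> hypercube n" for z
    using that assms unfolding hypercube_def by auto
  have "(\<Sum>z\<in>hypercube n. f z) = (\<Sum>z\<in>hypercube n. f (?flip z))"
    by (rule sum.reindex_bij_witness[where i="?flip" and j="?flip"]) (auto simp: flip)
  then have "(\<Sum>z\<in>hypercube n. f z) = (\<Sum>z\<in>hypercube n. (f z + f (?flip z)) / 2)"
    by (simp add: sum_divide_distrib[symmetric] sum.distrib)
  also have "\<dots> = (\<Sum>z\<in>hypercube n. (f (z(i:=1)) + f (z(i:=-1))) / 2)"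
  proof (rule sum.cong[OF refl])
    fix z assume "z \<in> hypercube n"
    then have "z i = 1 \<or> z i = -1" using assms unfolding hypercube_def by auto
    then show "(f z + f (?flip z)) / 2 = (f (z(i:=1)) + f (z(i:=-1))) / 2"
      by (metis add.commute fun_upd_triv minus_minus)
  qed
  finally show ?thesis .
qed

lemma sum_hypercube_prod_eq_0:
  assumes "i \<in> S" "S \<subseteq> {..<n}"
  shows "(\<Sum>z\<in>hypercube n. \<Prod>j\<in>S. z j) = 0"
proof -
  have "finite S" using assms(2) finite_subset by blast
  then have split: "(\<Prod>j\<in>S. (z(i:=c)) j) = c * (\<Prod>j\<in>S-{i}. z j)" for z :: "nat \<Rightarrow> real" and c
    using assms(1) by (simp add: prod.remove)
  have "(\<Sum>z\<in>hypercube n. \<Prod>j\<in>S. z j)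
      = (\<Sum>z\<in>hypercube n. ((\<Prod>j\<in>S. (z(i:=1)) j) + (\<Prod>j\<in>S. (z(i:=-1)) j)) / 2)"
    using assms by (intro sum_hypercube_flip) auto
  also have "\<dots> = 0" by (simp only: split) simp
  finally show ?thesis .
qed

lemma mult_power_le_split:
  fixes s y K :: real
  assumes "s \<ge> 0" "y \<ge> 0" "K > 0"
  shows "s * y ^ m \<le> K ^ m * s ^ (m+1) + y ^ (m+1) / K"
proof (cases "y \<le> K * s")
  case True
  have "s * y ^ m \<le> s * (K * s) ^ m"
    using True assms by (intro mult_left_mono power_mono) auto
  also have "\<dots> = K ^ m * s ^ (m+1)" by (simp add: power_mult_distrib)
  finally show ?thesis using assms by (smt (verit) divide_nonneg_pos zero_le_power)
next
  case False
  then have "s \<le> y / K" using assms by (simp add: field_simps)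
  then have "s * y ^ m \<le> y / K * y ^ m" using assms by (intro mult_right_mono) auto
  also have "\<dots> = y ^ (m+1) / K" by simp
  finally show ?thesis using assms by (smt (verit) mult_nonneg_nonneg zero_le_power)
qed

lemma abs_power_diff_le:
  fixes a b :: real
  shows "\<bar>a ^ q - b ^ q\<bar> \<le> \<bar>a - b\<bar> * q * (\<bar>a\<bar> ^ (q-1) + \<bar>b\<bar> ^ (q-1))"
proof -
  let ?M = "max \<bar>a\<bar> \<bar>b\<bar>"
  have "\<bar>\<Sum>k<q. b ^ (q - Suc k) * a ^ k\<bar> \<le> (\<Sum>k<q. \<bar>b\<bar> ^ (q - Suc k) * \<bar>a\<bar> ^ k)"
    by (rule order_trans[OF sum_abs]) (simp add: abs_mult power_abs)
  also have "\<dots> \<le> (\<Sum>k<q. ?M ^ (q - Suc k) * ?M ^ k)"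
    by (intro sum_mono mult_mono power_mono) auto
  also have "\<dots> = q * ?M ^ (q - 1)"
    by (simp add: power_add[symmetric])
  also have "\<dots> \<le> q * (\<bar>a\<bar> ^ (q-1) + \<bar>b\<bar> ^ (q-1))"
    by (intro mult_left_mono) (auto simp: max_def)
  finally have "\<bar>\<Sum>k<q. b ^ (q - Suc k) * a ^ k\<bar> \<le> q * (\<bar>a\<bar> ^ (q-1) + \<bar>b\<bar> ^ (q-1))" .
  then show ?thesis
    unfolding power_diff_sumr2[of a q b] abs_mult mult.assoc by (intro mult_left_mono) auto
qed

lemma mult_odd_power_diff_le:
  fixes r w :: real
  shows "w * ((r + 2*w) ^ (2*m+1) - (r - 2*w) ^ (2*m+1))
    \<le> 4 * (2 * real m + 1) * w^2 * ((r + 2*w) ^ (2*m) + (r - 2*w) ^ (2*m))"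
proof -
  have even_abs: "\<bar>x\<bar> ^ (2*m) = x ^ (2*m)" for x :: real
    by (simp add: power_mult power2_abs)
  have "w * ((r + 2*w) ^ (2*m+1) - (r - 2*w) ^ (2*m+1))
      \<le> \<bar>w\<bar> * \<bar>(r + 2*w) ^ (2*m+1) - (r - 2*w) ^ (2*m+1)\<bar>"
    by (metis abs_ge_self abs_mult)
  also have "\<dots> \<le> \<bar>w\<bar> * (\<bar>4*w\<bar> * (2 * real m + 1) * ((r + 2*w) ^ (2*m) + (r - 2*w) ^ (2*m)))"
    using abs_power_diff_le[of "r + 2*w" "2*m+1" "r - 2*w"]
    by (intro mult_left_mono) (auto simp: even_abs add.commute)
  also have "\<dots> = 4 * (2 * real m + 1) * w^2 * ((r + 2*w) ^ (2*m) + (r - 2*w) ^ (2*m))"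
  proof -
    have "\<bar>w\<bar> * \<bar>4*w\<bar> = 4 * w^2"
      by (simp add: abs_mult power2_eq_square flip: mult.assoc)
    then show ?thesis by (simp only: mult.assoc[symmetric]) (simp add: algebra_simps)
  qed
  finally show ?thesis .
qed

lemma power_two_power_add_le:
  fixes a b :: real
  shows "(a + b) ^ (2^k) \<le> 2 ^ (2^k - 1) * (a ^ (2^k) + b ^ (2^k))"
proof (induction k arbitrary: a b)
  case 0 then show ?case by simp
next
  case (Suc k)
  have sq: "x ^ (2 ^ Suc k) = (x^2) ^ (2^k)" for x :: real
    by (simp add: power_mult[symmetric] mult.commute)
  have "(a + b)^2 \<le> 2 * (a^2 + b^2)"
    using sum_squares_ge_zero[of "a - b" 0] by (simp add: power2_eq_square algebra_simps)
  then have "(a + b) ^ (2 ^ Suc k) \<le> (2 * (a^2 + b^2)) ^ (2^k)"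
    unfolding sq by (intro power_mono) auto
  also have "\<dots> \<le> 2^(2^k) * (2 ^ (2^k - 1) * ((a^2) ^ (2^k) + (b^2) ^ (2^k)))"
    unfolding power_mult_distrib using Suc.IH[of "a^2" "b^2"] by (intro mult_left_mono) auto
  also have "\<dots> = 2 ^ (2^k + (2^k - 1)) * (a ^ (2 ^ Suc k) + b ^ (2 ^ Suc k))"
    by (simp only: sq power_add mult.assoc)
  also have "2^k + (2^k - 1) = 2 ^ Suc k - (1::nat)"
    using one_le_power[of "2::nat" k] by simp
  finally show ?case .
qed

section \<open>Rademacher chaos of a hollow symmetric matrix\<close>

definition symmetric_mat :: "nat \<Rightarrow> (nat \<Rightarrow> nat \<Rightarrow> real) \<Rightarrow> bool" where
  "symmetric_mat n A \<longleftrightarrow> (\<forall>i<n. \<forall>j<n. A i j = A j i)"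

definition hollow_sym :: "nat \<Rightarrow> (nat \<Rightarrow> nat \<Rightarrow> real) \<Rightarrow> bool" where
  "hollow_sym n A \<longleftrightarrow> (\<forall>i<n. A i i = 0) \<and> symmetric_mat n A"

lemma quad_form_eq_sum_mat_vec: "quad_form n A z = (\<Sum>i<n. z i * mat_vec n A z i)"
  unfolding quad_form_def mat_vec_def by (simp add: sum_distrib_left mult.assoc)

lemma sum_mult_fun_upd:
  fixes g u :: "nat \<Rightarrow> real"
  assumes "i < n"
  shows "(\<Sum>j<n. g j * (u(i:=c)) j) = (\<Sum>j<n. g j * u j) + g i * (c - u i)"
proof -
  have "(\<Sum>j<n. g j * (u(i:=c)) j) = g i * c + (\<Sum>j\<in>{..<n}-{i}. g j * u j)"
    using assms by (simp add: sum.remove[of _ i])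
  moreover have "(\<Sum>j<n. g j * u j) = g i * u i + (\<Sum>j\<in>{..<n}-{i}. g j * u j)"
    using assms by (simp add: sum.remove[of _ i])
  ultimately show ?thesis by (simp add: algebra_simps)
qed

lemma mat_vec_fun_upd:
  "i < n \<Longrightarrow> mat_vec n A (z(i:=c)) j = mat_vec n A z j + A j i * (c - z i)"
  unfolding mat_vec_def by (rule sum_mult_fun_upd)

lemma mat_vec_fun_upd_diag:
  "A i i = 0 \<Longrightarrow> i < n \<Longrightarrow> mat_vec n A (z(i:=c)) i = mat_vec n A z i"
  by (simp add: mat_vec_fun_upd)

lemma quad_form_fun_upd:
  assumes "hollow_sym n A" "i < n"
  shows "quad_form n A (z(i:=c)) = quad_form n A (z(i:=0)) + 2 * c * mat_vec n A z i"
proof -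
  let ?u = "z(i:=0)"
  have diag: "A i i = 0" and col: "\<And>j. j < n \<Longrightarrow> A j i = A i j"
    using assms unfolding hollow_sym_def symmetric_mat_def by auto
  have Au: "mat_vec n A ?u i = mat_vec n A z i"
    using mat_vec_fun_upd_diag[of A i n, OF diag assms(2)] by (metis fun_upd_triv fun_upd_upd)
  have "quad_form n A (?u(i:=c)) = (\<Sum>j<n. (?u(i:=c)) j * (mat_vec n A ?u j + A j i * c))"
    unfolding quad_form_eq_sum_mat_vec using mat_vec_fun_upd[OF assms(2), of A ?u c] by simp
  also have "\<dots> = (\<Sum>j<n. mat_vec n A ?u j * (?u(i:=c)) j)
      + c * (\<Sum>j<n. A i j * (?u(i:=c)) j)"
    using col by (simp add: algebra_simps sum.distrib sum_distrib_left)
  also have "(\<Sum>j<n. A i j * (?u(i:=c)) j) = mat_vec n A z i"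
    using mat_vec_fun_upd_diag[of A i n, OF diag assms(2), of ?u c] Au
    unfolding mat_vec_def by simp
  also have "(\<Sum>j<n. mat_vec n A ?u j * (?u(i:=c)) j) = quad_form n A ?u + c * mat_vec n A z i"
    using sum_mult_fun_upd[OF assms(2), of "mat_vec n A ?u" ?u c] Au
    unfolding quad_form_eq_sum_mat_vec by (simp add: mult.commute)
  finally show ?thesis by (simp only: fun_upd_upd)
qed

lemma sum_hypercube_quad_form_eq_0:
  assumes "hollow_sym n A"
  shows "(\<Sum>z\<in>hypercube n. quad_form n A z) = 0"
proof -
  have "(\<Sum>z\<in>hypercube n. z i * mat_vec n A z i) = 0" if "i < n" for i
  proof -
    have "A i i = 0" using assms that unfolding hollow_sym_def symmetric_mat_def by auto
    then show ?thesis
      using sum_hypercube_flip[OF that, of "\<lambda>z. z i * mat_vec n A z i"]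
      by (simp add: mat_vec_fun_upd_diag that)
  qed
  then show ?thesis
    unfolding quad_form_eq_sum_mat_vec by (subst sum.swap) simp
qed

text \<open>Stein's method for the exchangeable pair obtained by resampling coordinate \<open>i\<close>:
  writing \<open>Q = q + 2 z\<^sub>i w\<close> with \<open>w = (Az)\<^sub>i\<close> and \<open>q\<close> independent of \<open>z\<^sub>i\<close>, the term
  \<open>z\<^sub>i w Q\<^sup>2\<^sup>m\<^sup>+\<^sup>1\<close> averages to a difference of odd powers at \<open>q \<plusminus> 2w\<close>.\<close>

lemma sum_hypercube_coordinate_moment_le:
  assumes "hollow_sym n A" "i < n"
  shows "(\<Sum>z\<in>hypercube n. z i * mat_vec n A z i * quad_form n A z ^ (2*m+1))
     \<le> 4 * (2 * real m + 1) * (\<Sum>z\<in>hypercube n. mat_vec n A z i ^ 2 * quad_form n A z ^ (2*m))"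
proof -
  let ?F = "\<lambda>z. z i * mat_vec n A z i * quad_form n A z ^ (2*m+1)"
  let ?G = "\<lambda>z. 4 * (2 * real m + 1) * (mat_vec n A z i ^ 2 * quad_form n A z ^ (2*m))"
  have diag: "A i i = 0" using assms unfolding hollow_sym_def symmetric_mat_def by auto
  have "(\<Sum>z\<in>hypercube n. ?F z) = (\<Sum>z\<in>hypercube n. (?F (z(i:=1)) + ?F (z(i:=-1))) / 2)"
    by (rule sum_hypercube_flip[OF assms(2)])
  also have "\<dots> \<le> (\<Sum>z\<in>hypercube n. (?G (z(i:=1)) + ?G (z(i:=-1))) / 2)"
  proof (rule sum_mono)
    fix z :: "nat \<Rightarrow> real"
    let ?w = "mat_vec n A z i" and ?q = "quad_form n A (z(i:=0))"
    have Q: "quad_form n A (z(i:=1)) = ?q + 2 * ?w" "quad_form n A (z(i:=-1)) = ?q - 2 * ?w"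
      using quad_form_fun_upd[OF assms, of z 1] quad_form_fun_upd[OF assms, of z "-1"] by simp_all
    have w: "mat_vec n A (z(i:=c)) i = ?w" for c
      by (rule mat_vec_fun_upd_diag[of A i n, OF diag assms(2)])
    have "?F (z(i:=1)) + ?F (z(i:=-1)) = ?w * ((?q + 2*?w) ^ (2*m+1) - (?q - 2*?w) ^ (2*m+1))"
      by (simp add: Q w right_diff_distrib)
    also have "\<dots> \<le> 4 * (2 * real m + 1) * ?w^2 * ((?q + 2*?w) ^ (2*m) + (?q - 2*?w) ^ (2*m))"
      by (rule mult_odd_power_diff_le)
    also have "\<dots> = ?G (z(i:=1)) + ?G (z(i:=-1))"
      by (simp add: Q w algebra_simps)
    finally show "(?F (z(i:=1)) + ?F (z(i:=-1))) / 2 \<le> (?G (z(i:=1)) + ?G (z(i:=-1))) / 2"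
      by simp
  qed
  also have "\<dots> = (\<Sum>z\<in>hypercube n. ?G z)"
    by (rule sum_hypercube_flip[OF assms(2), symmetric])
  finally show ?thesis by (simp add: sum_distrib_left)
qed

lemma sum_hypercube_moment_le:
  assumes "hollow_sym n A"
  shows "(\<Sum>z\<in>hypercube n. quad_form n A z ^ (2*m+2))
     \<le> 4 * (2 * real m + 1) * (\<Sum>z\<in>hypercube n. (\<Sum>i<n. mat_vec n A z i ^ 2) * quad_form n A z ^ (2*m))"
proof -
  have "quad_form n A z ^ (2*m+2) = (\<Sum>i<n. z i * mat_vec n A z i * quad_form n A z ^ (2*m+1))" for z
    by (simp add: sum_distrib_right[symmetric] flip: quad_form_eq_sum_mat_vec)
  then have "(\<Sum>z\<in>hypercube n. quad_form n A z ^ (2*m+2))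
      = (\<Sum>z\<in>hypercube n. \<Sum>i<n. z i * mat_vec n A z i * quad_form n A z ^ (2*m+1))"
    by simp
  also have "\<dots> = (\<Sum>i<n. \<Sum>z\<in>hypercube n. z i * mat_vec n A z i * quad_form n A z ^ (2*m+1))"
    by (rule sum.swap)
  also have "\<dots> \<le> (\<Sum>i<n. 4 * (2 * real m + 1)
      * (\<Sum>z\<in>hypercube n. mat_vec n A z i ^ 2 * quad_form n A z ^ (2*m)))"
    by (intro sum_mono sum_hypercube_coordinate_moment_le[OF assms]) simp
  also have "\<dots> = 4 * (2 * real m + 1)
      * (\<Sum>i<n. \<Sum>z\<in>hypercube n. mat_vec n A z i ^ 2 * quad_form n A z ^ (2*m))"
    by (simp add: sum_distrib_left)
  also have "(\<Sum>i<n. \<Sum>z\<in>hypercube n. mat_vec n A z i ^ 2 * quad_form n A z ^ (2*m))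
      = (\<Sum>z\<in>hypercube n. (\<Sum>i<n. mat_vec n A z i ^ 2) * quad_form n A z ^ (2*m))"
    by (subst sum.swap) (simp add: sum_distrib_right)
  finally show ?thesis .
qed

text \<open>Splitting \<open>\<sigma> Q\<^sup>2\<^sup>m \<le> K\<^sup>m \<sigma>\<^sup>m\<^sup>+\<^sup>1 + Q\<^sup>2\<^sup>m\<^sup>+\<^sup>2/K\<close> with \<open>K = 8(2m+1)\<close> lets the
  \<open>Q\<^sup>2\<^sup>m\<^sup>+\<^sup>2\<close> term be absorbed into the left-hand side.\<close>

lemma sum_hypercube_moment_le_norm_moment:
  assumes "hollow_sym n A" "p \<ge> 1"
  shows "(\<Sum>z\<in>hypercube n. quad_form n A z ^ (2*p))
     \<le> (16 * real p) ^ p * (\<Sum>z\<in>hypercube n. (\<Sum>i<n. mat_vec n A z i ^ 2) ^ p)"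
proof -
  obtain m where p: "p = m + 1" using assms(2) by (metis add.commute le_Suc_ex)
  define K :: real where "K = 8 * (2 * real m + 1)"
  let ?\<sigma> = "\<lambda>z. \<Sum>i<n. mat_vec n A z i ^ 2"
  let ?S = "\<Sum>z\<in>hypercube n. quad_form n A z ^ (2*m+2)"
  let ?T = "\<Sum>z\<in>hypercube n. ?\<sigma> z ^ (m+1)"
  have "?\<sigma> z * quad_form n A z ^ (2*m) \<le> K ^ m * ?\<sigma> z ^ (m+1) + quad_form n A z ^ (2*m+2) / K"
    for z
  proof -
    have e: "(quad_form n A z ^ 2) ^ m = quad_form n A z ^ (2*m)"
      "(quad_form n A z ^ 2) ^ (m+1) = quad_form n A z ^ (2*m+2)"
      unfolding power_mult[symmetric] by (simp_all add: algebra_simps)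
    have "?\<sigma> z * (quad_form n A z ^ 2) ^ m
        \<le> K ^ m * ?\<sigma> z ^ (m+1) + (quad_form n A z ^ 2) ^ (m+1) / K"
      by (rule mult_power_le_split) (auto simp: K_def sum_nonneg)
    then show ?thesis unfolding e .
  qed
  then have "(\<Sum>z\<in>hypercube n. ?\<sigma> z * quad_form n A z ^ (2*m))
      \<le> (\<Sum>z\<in>hypercube n. K ^ m * ?\<sigma> z ^ (m+1) + quad_form n A z ^ (2*m+2) / K)"
    by (rule sum_mono)
  also have "\<dots> = K ^ m * ?T + ?S / K"
    by (simp only: sum.distrib sum_distrib_left sum_divide_distrib)
  finally have "(\<Sum>z\<in>hypercube n. ?\<sigma> z * quad_form n A z ^ (2*m)) \<le> K ^ m * ?T + ?S / K" .
  then have "?S \<le> 4 * (2 * real m + 1) * (K ^ m * ?T + ?S / K)"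
    using sum_hypercube_moment_le[OF assms(1), of m] by (smt (verit) mult_left_mono of_nat_0_le_iff)
  also have "\<dots> = (K ^ (m+1) * ?T + ?S) / 2"
    by (simp add: K_def field_simps del: sum_divide_distrib)
  finally have "?S \<le> K ^ (m+1) * ?T" by simp
  also have "\<dots> \<le> (16 * real p) ^ p * ?T"
    unfolding p K_def by (intro mult_right_mono power_mono sum_nonneg) (auto simp: sum_nonneg)
  finally show ?thesis by (simp add: p)
qed

section \<open>Norms of vectors and matrices\<close>

definition mat_bounded :: "nat \<Rightarrow> (nat \<Rightarrow> nat \<Rightarrow> real) \<Rightarrow> real \<Rightarrow> bool" where
  "mat_bounded n A c \<longleftrightarrow> (\<forall>x. vec_norm2 n (mat_vec n A x) \<le> c * vec_norm2 n x)"

definition offdiag :: "(nat \<Rightarrow> nat \<Rightarrow> real) \<Rightarrow> nat \<Rightarrow> nat \<Rightarrow> real" where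
  "offdiag A i j = (if i = j then 0 else A i j)"

definition gram :: "nat \<Rightarrow> (nat \<Rightarrow> nat \<Rightarrow> real) \<Rightarrow> nat \<Rightarrow> nat \<Rightarrow> real" where
  "gram n A j k = (\<Sum>i<n. A i j * A i k)"

lemma vec_norm2_nonneg: "vec_norm2 n x \<ge> 0"
  unfolding vec_norm2_def by (simp add: sum_nonneg)

lemma vec_norm2_power2: "vec_norm2 n x ^ 2 = (\<Sum>i<n. x i ^ 2)"
  unfolding vec_norm2_def by (simp add: sum_nonneg)

lemma vec_norm2_cong: "(\<And>j. j < n \<Longrightarrow> x j = y j) \<Longrightarrow> vec_norm2 n x = vec_norm2 n y"
  unfolding vec_norm2_def by (intro arg_cong[where f=sqrt] sum.cong) auto

lemma vec_norm2_add_le: "vec_norm2 n (\<lambda>j. x j + y j) \<le> vec_norm2 n x + vec_norm2 n y"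
  using L2_set_triangle_ineq[of x y "{..<n}"] unfolding vec_norm2_def L2_set_def by simp

lemma vec_norm2_divide: "vec_norm2 n (\<lambda>i. x i / r) = vec_norm2 n x / \<bar>r\<bar>"
proof -
  have "(\<Sum>i<n. (x i / r)^2) = (\<Sum>i<n. x i ^ 2) / r^2"
    by (simp add: power_divide sum_divide_distrib)
  then show ?thesis unfolding vec_norm2_def by (simp add: real_sqrt_divide)
qed

lemma vec_norm2_mult_le:
  assumes "\<And>j. j < n \<Longrightarrow> \<bar>d j\<bar> \<le> c"
  shows "vec_norm2 n (\<lambda>j. d j * x j) \<le> c * vec_norm2 n x"
proof -
  have c: "c \<ge> 0" if "n > 0" using assms[of 0] that by simp
  have "(\<Sum>j<n. (d j * x j)^2) \<le> (\<Sum>j<n. c^2 * x j ^ 2)"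
  proof (rule sum_mono)
    fix j assume "j \<in> {..<n}"
    then have "\<bar>d j\<bar> ^ 2 \<le> c^2" using assms by (intro power_mono) auto
    then have "(d j)^2 \<le> c^2" by simp
    then show "(d j * x j)^2 \<le> c^2 * x j ^ 2" by (simp add: power_mult_distrib mult_right_mono)
  qed
  then have "sqrt (\<Sum>j<n. (d j * x j)^2) \<le> sqrt (c^2 * (\<Sum>j<n. x j ^ 2))"
    by (simp add: sum_distrib_left)
  also have "\<dots> = c * sqrt (\<Sum>j<n. x j ^ 2)"
    using c by (cases "n = 0") (simp_all add: real_sqrt_mult)
  finally show ?thesis unfolding vec_norm2_def .
qed

lemma mat_frob_nonneg: "mat_frob n A \<ge> 0"
  unfolding mat_frob_def by (simp add: sum_nonneg)

lemma mat_frob_power2: "mat_frob n A ^ 2 = (\<Sum>i<n. \<Sum>j<n. A i j ^ 2)"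
  unfolding mat_frob_def by (simp add: sum_nonneg)

lemma mat_bounded_sum_power2:
  assumes "mat_bounded n A c" "c \<ge> 0"
  shows "(\<Sum>j<n. mat_vec n A x j ^ 2) \<le> c^2 * (\<Sum>j<n. x j ^ 2)"
proof -
  have "vec_norm2 n (mat_vec n A x) ^ 2 \<le> (c * vec_norm2 n x) ^ 2"
    using assms unfolding mat_bounded_def by (intro power_mono) (auto simp: vec_norm2_nonneg)
  then show ?thesis by (simp add: vec_norm2_power2 power_mult_distrib)
qed

lemma mat_vec_unit: "j < n \<Longrightarrow> mat_vec n A (\<lambda>k. if k = j then 1 else 0) i = A i j"
  unfolding mat_vec_def by (simp add: if_distrib cong: if_cong)

lemma vec_norm2_unit:
  assumes "j < n"
  shows "vec_norm2 n (\<lambda>k. if k = j then 1 else 0) = 1"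
proof -
  have "(\<Sum>k<n. (if k = j then 1 else 0 :: real) ^ 2) = (\<Sum>k<n. if k = j then 1 else 0)"
    by (intro sum.cong) auto
  then show ?thesis using assms unfolding vec_norm2_def by simp
qed

lemma mat_bounded_column:
  assumes "mat_bounded n A c" "c \<ge> 0" "j < n"
  shows "(\<Sum>i<n. A i j ^ 2) \<le> c^2"
  using mat_bounded_sum_power2[OF assms(1,2), of "\<lambda>k. if k = j then 1 else 0"]
    vec_norm2_unit[OF assms(3)]
  by (simp add: mat_vec_unit[OF assms(3)] vec_norm2_power2[symmetric])

lemma hollow_sym_offdiag_gram: "hollow_sym n (offdiag (gram n A))"
  unfolding hollow_sym_def symmetric_mat_def offdiag_def gram_def by (auto simp: mult.commute)

lemma sum_mat_vec_power2_eq: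
  assumes "z \<in> hypercube n"
  shows "(\<Sum>i<n. mat_vec n A z i ^ 2) = mat_frob n A ^ 2 + quad_form n (offdiag (gram n A)) z"
proof -
  have "(\<Sum>i<n. mat_vec n A z i ^ 2) = (\<Sum>i<n. \<Sum>j<n. \<Sum>k<n. z j * (A i j * A i k) * z k)"
    unfolding mat_vec_def power2_eq_square sum_product by (simp add: algebra_simps)
  also have "\<dots> = (\<Sum>j<n. \<Sum>k<n. z j * gram n A j k * z k)"
    unfolding gram_def sum_distrib_left sum_distrib_right
    by (subst sum.swap, rule sum.cong[OF refl], rule sum.swap)
  also have "\<dots> = (\<Sum>j<n. \<Sum>k<n. z j * offdiag (gram n A) j k * z k + (if j = k then gram n A j j else 0))"
    using hypercube_square[OF assms] by (intro sum.cong refl) (auto simp: offdiag_def)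
  also have "\<dots> = quad_form n (offdiag (gram n A)) z + (\<Sum>j<n. gram n A j j)"
    by (simp add: sum.distrib quad_form_def)
  also have "(\<Sum>j<n. gram n A j j) = mat_frob n A ^ 2"
    unfolding gram_def mat_frob_power2 by (subst sum.swap) (simp add: power2_eq_square)
  finally show ?thesis by simp
qed

lemma gram_eq_mat_vec:
  "symmetric_mat n A \<Longrightarrow> j < n \<Longrightarrow> gram n A j k = mat_vec n A (\<lambda>i. A i k) j"
  unfolding gram_def mat_vec_def symmetric_mat_def by (auto intro!: sum.cong)

lemma mat_frob_offdiag_gram_le:
  assumes "symmetric_mat n A" "mat_bounded n A c" "c \<ge> 0"
  shows "mat_frob n (offdiag (gram n A)) \<le> c * mat_frob n A"
proof -
  have "mat_frob n (offdiag (gram n A)) ^ 2 \<le> (\<Sum>k<n. \<Sum>j<n. gram n A j k ^ 2)"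
    unfolding mat_frob_power2 offdiag_def by (subst sum.swap) (intro sum_mono, auto)
  also have "\<dots> \<le> (\<Sum>k<n. c^2 * (\<Sum>i<n. A i k ^ 2))"
    using mat_bounded_sum_power2[OF assms(2,3)]
    by (intro sum_mono) (simp add: gram_eq_mat_vec[OF assms(1)])
  also have "\<dots> = c^2 * (\<Sum>k<n. \<Sum>i<n. A i k ^ 2)"
    by (simp add: sum_distrib_left)
  also have "(\<Sum>k<n. \<Sum>i<n. A i k ^ 2) = mat_frob n A ^ 2"
    unfolding mat_frob_power2 by (rule sum.swap)
  finally show ?thesis
    using assms(3) mat_frob_nonneg by (simp add: power2_le_iff_abs_le flip: power_mult_distrib)
qed

text \<open>\<open>offdiag (A\<^sup>T A) = A\<^sup>2 - diag\<close>, and the diagonal entries are squared column norms,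
  hence at most \<open>c\<^sup>2\<close>.\<close>

lemma mat_bounded_offdiag_gram:
  assumes "symmetric_mat n A" "mat_bounded n A c" "c \<ge> 0"
  shows "mat_bounded n (offdiag (gram n A)) (2 * c^2)"
  unfolding mat_bounded_def
proof
  fix x
  let ?AAx = "mat_vec n A (mat_vec n A x)"
  let ?d = "\<lambda>j. - gram n A j j"
  have eq: "mat_vec n (offdiag (gram n A)) x j = ?AAx j + ?d j * x j" if j: "j < n" for j
  proof -
    have "?AAx j = (\<Sum>i<n. \<Sum>k<n. A j i * A i k * x k)"
      unfolding mat_vec_def by (simp add: sum_distrib_left mult.assoc)
    also have "\<dots> = (\<Sum>k<n. \<Sum>i<n. A i j * A i k * x k)"
      using j assms(1) unfolding symmetric_mat_def by (subst sum.swap) (auto intro!: sum.cong)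
    also have "\<dots> = (\<Sum>k<n. gram n A j k * x k)"
      unfolding gram_def by (simp add: sum_distrib_right)
    finally have AA: "?AAx j = (\<Sum>k<n. gram n A j k * x k)" .
    have "mat_vec n (offdiag (gram n A)) x j
        = (\<Sum>k<n. gram n A j k * x k - (if k = j then gram n A j j * x j else 0))"
      unfolding mat_vec_def offdiag_def by (intro sum.cong) auto
    also have "\<dots> = (\<Sum>k<n. gram n A j k * x k) - gram n A j j * x j"
      using j by (simp add: sum_subtractf)
    finally show ?thesis using AA by simp
  qed
  have d: "\<bar>?d j\<bar> \<le> c^2" if "j < n" for j
  proof -
    have "gram n A j j = (\<Sum>i<n. A i j ^ 2)"
      unfolding gram_def by (simp add: power2_eq_square)
    then show ?thesis
      using mat_bounded_column[OF assms(2,3) that] by (simp add: sum_nonneg)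
  qed
  have AA: "vec_norm2 n ?AAx \<le> c * (c * vec_norm2 n x)"
    using assms(2,3) unfolding mat_bounded_def by (meson mult_left_mono order_trans)
  have "vec_norm2 n (mat_vec n (offdiag (gram n A)) x) = vec_norm2 n (\<lambda>j. ?AAx j + ?d j * x j)"
    by (rule vec_norm2_cong) (rule eq)
  also have "\<dots> \<le> vec_norm2 n ?AAx + vec_norm2 n (\<lambda>j. ?d j * x j)"
    by (rule vec_norm2_add_le)
  also have "\<dots> \<le> c * (c * vec_norm2 n x) + c^2 * vec_norm2 n x"
    using AA vec_norm2_mult_le[of n ?d "c^2" x] d by (meson add_mono)
  finally show "vec_norm2 n (mat_vec n (offdiag (gram n A)) x) \<le> 2 * c^2 * vec_norm2 n x"
    by (simp add: power2_eq_square algebra_simps)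
qed

section \<open>Moments of the chaos under the uniform distribution\<close>

lemma hanson_wright_radius_le:
  fixes p s c :: real
  assumes "p \<ge> 1" "s \<ge> 0" "c \<ge> 0"
  defines "Q \<equiv> max (sqrt (2*p) * s) (2*p*c)"
  shows "max (sqrt p * (c * s)) (p * (2 * c^2)) \<le> Q^2 / (2*p)"
    and "s^2 \<le> Q^2 / (2*p)"
proof -
  have Q1: "sqrt (2*p) * s \<le> Q" and Q2: "2*p*c \<le> Q" unfolding Q_def by auto
  have Q0: "Q \<ge> 0" unfolding Q_def using assms(1-3) by (simp add: le_max_iff_disj)
  have Q1': "(sqrt (2*p) * s)^2 \<le> Q^2" and Q2': "(2*p*c)^2 \<le> Q^2"
    using Q1 Q2 assms(1-3) by (auto intro!: power_mono)
  have "sqrt p * (s * (2*p*c)) \<le> sqrt (2*p) * (s * (2*p*c))"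
    using assms by (intro mult_right_mono) auto
  then have "sqrt p * (c * s) * (2*p) \<le> sqrt (2*p) * s * (2*p*c)"
    by (simp add: algebra_simps)
  also have "\<dots> \<le> Q * Q" using Q0 Q1 Q2 assms(1-3) by (intro mult_mono) auto
  finally have "sqrt p * (c * s) \<le> Q^2 / (2*p)"
    using assms(1) by (simp add: field_simps power2_eq_square)
  moreover have "p * (2 * c^2) \<le> Q^2 / (2*p)"
    using Q2' assms(1) by (simp add: field_simps power2_eq_square)
  ultimately show "max (sqrt p * (c * s)) (p * (2 * c^2)) \<le> Q^2 / (2*p)" by simp
  show "s^2 \<le> Q^2 / (2*p)"
    using Q1' assms(1) by (simp add: field_simps power_mult_distrib)
qed

lemma hanson_wright_step_arith:
  fixes N Q R :: real and p :: nat
  assumes "p \<ge> 1" "N \<ge> 0" "Q \<ge> 0" "R = Q^2 / (2 * real p)"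
  shows "(16 * real p)^p * (2^(p-1) * (N * R^p + N * 16^p * R^p)) \<le> N * 16^(2*p) * Q^(2*p)"
proof -
  have "(16 * real p) * R = 8 * Q^2" using assms(1,4) by (simp add: field_simps)
  then have e: "(16 * real p)^p * R^p = 8^p * Q^(2*p)"
    by (simp only: power_mult_distrib[symmetric] power_mult)
  have "(16 * real p)^p * (2^(p-1) * (N * R^p + N * 16^p * R^p))
      = 2^(p-1) * (1 + 16^p) * N * ((16 * real p)^p * R^p)"
    by (simp add: algebra_simps)
  also have "\<dots> \<le> 2^(p-1) * (2 * 16^p) * N * (8^p * Q^(2*p))"
    unfolding e using assms(2,3) by (intro mult_right_mono mult_left_mono) auto
  also have "(2::real)^(p-1) * (2 * 16^p) = 2^p * 16^p"
    using assms(1) by (cases p) auto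
  also have "2^p * 16^p * N * (8^p * Q^(2*p)) = N * ((2*16)*8)^p * Q^(2*p)"
    by (simp only: power_mult_distrib) (simp add: algebra_simps)
  also have "((2*16)*8::real)^p = 16^(2*p)"
    by (simp add: power_mult)
  finally show ?thesis .
qed

text \<open>A Hanson--Wright bound for Rademacher chaos by induction on \<open>k\<close>: the moment of order
  \<open>2p\<close> of \<open>z\<^sup>T A z\<close> is controlled by the moment of order \<open>p\<close> of \<open>\<parallel>Az\<parallel>\<^sup>2\<close>, which is
  \<open>\<parallel>A\<parallel>\<^sub>F\<^sup>2\<close> plus the chaos of \<open>offdiag (A\<^sup>T A)\<close>.\<close>

lemma sum_hypercube_moment_two_power_le:
  assumes "hollow_sym n A" "mat_bounded n A c" "c \<ge> 0"
  shows "(\<Sum>z\<in>hypercube n. quad_form n A z ^ (2^k))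
    \<le> card (hypercube n) * 16^(2^k) * max (sqrt (2^k) * mat_frob n A) (2^k * c) ^ (2^k)"
  using assms
proof (induction k arbitrary: A c)
  case 0
  then show ?case
    using sum_hypercube_quad_form_eq_0[OF "0.prems"(1)] mat_frob_nonneg[of n A]
    by (simp add: le_max_iff_disj)
next
  case (Suc k)
  define p :: nat where "p = 2^k"
  define N where "N = real (card (hypercube n))"
  define s where "s = mat_frob n A"
  define Q where "Q = max (sqrt (2 * real p) * s) (2 * real p * c)"
  define R where "R = Q^2 / (2 * real p)"
  let ?M = "offdiag (gram n A)"
  have p: "p \<ge> 1" "real p = 2^k" unfolding p_def by simp_all
  have s: "s \<ge> 0" unfolding s_def by (rule mat_frob_nonneg)
  have sym: "symmetric_mat n A" using Suc.prems(1) unfolding hollow_sym_def by simp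
  have "sqrt (real p) * mat_frob n ?M \<le> sqrt (real p) * (c * s)"
    unfolding s_def using mat_frob_offdiag_gram_le[OF sym Suc.prems(2,3)] by (simp add: mult_left_mono)
  then have "max (sqrt (real p) * mat_frob n ?M) (real p * (2 * c^2)) \<le> R"
    using hanson_wright_radius_le(1)[of "real p" s c] p s Suc.prems(3)
    unfolding R_def Q_def by linarith
  moreover have "0 \<le> max (sqrt (real p) * mat_frob n ?M) (real p * (2 * c^2))"
    by (simp add: le_max_iff_disj)
  ultimately have "max (sqrt (real p) * mat_frob n ?M) (real p * (2 * c^2)) ^ p \<le> R^p"
    by (rule power_mono)
  moreover have "(\<Sum>z\<in>hypercube n. quad_form n ?M z ^ p)
      \<le> N * 16^p * max (sqrt (real p) * mat_frob n ?M) (real p * (2 * c^2)) ^ p"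
    using Suc.IH[OF hollow_sym_offdiag_gram mat_bounded_offdiag_gram[OF sym Suc.prems(2,3)]]
    unfolding N_def p_def by simp
  ultimately have SM: "(\<Sum>z\<in>hypercube n. quad_form n ?M z ^ p) \<le> N * 16^p * R^p"
    unfolding N_def by (smt (verit) mult_left_mono zero_le_power zero_le_numeral of_nat_0_le_iff
        mult_nonneg_nonneg)
  have sR: "(s^2)^p \<le> R^p"
    using hanson_wright_radius_le(2)[of "real p" s c] p s Suc.prems(3)
    unfolding R_def Q_def by (intro power_mono) auto
  have "(\<Sum>z\<in>hypercube n. quad_form n A z ^ (2*p))
      \<le> (16 * real p) ^ p * (\<Sum>z\<in>hypercube n. (\<Sum>i<n. mat_vec n A z i ^ 2) ^ p)"
    by (rule sum_hypercube_moment_le_norm_moment[OF Suc.prems(1) p(1)])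
  also have "(\<Sum>z\<in>hypercube n. (\<Sum>i<n. mat_vec n A z i ^ 2) ^ p)
      = (\<Sum>z\<in>hypercube n. (s^2 + quad_form n ?M z) ^ p)"
    unfolding s_def by (intro sum.cong refl) (simp add: sum_mat_vec_power2_eq)
  also have "\<dots> \<le> (\<Sum>z\<in>hypercube n. 2^(p-1) * ((s^2)^p + quad_form n ?M z ^ p))"
    unfolding p_def by (intro sum_mono power_two_power_add_le)
  also have "\<dots> = 2^(p-1) * (N * (s^2)^p + (\<Sum>z\<in>hypercube n. quad_form n ?M z ^ p))"
    unfolding N_def by (simp only: sum_distrib_left[symmetric] sum.distrib) simp
  also have "\<dots> \<le> 2^(p-1) * (N * R^p + N * 16^p * R^p)"
    using sR SM by (intro mult_left_mono add_mono) (auto simp: N_def)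
  finally have "(\<Sum>z\<in>hypercube n. quad_form n A z ^ (2*p))
      \<le> (16 * real p) ^ p * (2^(p-1) * (N * R^p + N * 16^p * R^p))"
    by (simp add: mult_left_mono)
  also have "\<dots> \<le> N * 16^(2*p) * Q^(2*p)"
    using p s Suc.prems(3) by (intro hanson_wright_step_arith) (auto simp: N_def Q_def R_def le_max_iff_disj)
  finally show ?case
    using p unfolding N_def Q_def s_def by (simp add: p_def)
qed

lemma vec_norm2_mat_vec_le_frob: "vec_norm2 n (mat_vec n B x) \<le> mat_frob n B * vec_norm2 n x"
proof -
  have "(\<Sum>i<n. mat_vec n B x i ^ 2) \<le> (\<Sum>i<n. (\<Sum>j<n. B i j ^ 2) * (\<Sum>j<n. x j ^ 2))"
    unfolding mat_vec_def by (intro sum_mono Cauchy_Schwarz_ineq_sum)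
  also have "\<dots> = mat_frob n B ^ 2 * vec_norm2 n x ^ 2"
    by (simp add: mat_frob_power2 vec_norm2_power2 sum_distrib_right)
  finally show ?thesis
    using mat_frob_nonneg vec_norm2_nonneg
    by (simp add: vec_norm2_power2[symmetric] power2_le_iff_abs_le flip: power_mult_distrib)
qed

lemma vec_norm2_mat_vec_le_opnorm:
  assumes "vec_norm2 n x = 1"
  shows "vec_norm2 n (mat_vec n B x) \<le> mat_opnorm n B"
proof -
  have "bdd_above {vec_norm2 n (mat_vec n B x) | x. vec_norm2 n x = 1}"
  proof (rule bdd_aboveI[where M="mat_frob n B"])
    fix v assume "v \<in> {vec_norm2 n (mat_vec n B x) | x. vec_norm2 n x = 1}"
    then obtain x where "v = vec_norm2 n (mat_vec n B x)" "vec_norm2 n x = 1" by blast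
    then show "v \<le> mat_frob n B" using vec_norm2_mat_vec_le_frob[of n B x] by simp
  qed
  then show ?thesis
    unfolding mat_opnorm_def using assms by (intro cSup_upper) auto
qed

lemma mat_bounded_opnorm: "mat_bounded n B (mat_opnorm n B)"
  unfolding mat_bounded_def
proof
  fix x
  let ?r = "vec_norm2 n x"
  show "vec_norm2 n (mat_vec n B x) \<le> mat_opnorm n B * ?r"
  proof (cases "?r = 0")
    case True
    then have "\<forall>j\<in>{..<n}. x j ^ 2 = 0"
      unfolding vec_norm2_def by (subst sum_nonneg_eq_0_iff[symmetric]) (auto simp: sum_nonneg)
    then have "mat_vec n B x = (\<lambda>_. 0)" unfolding mat_vec_def by (simp add: fun_eq_iff)
    then show ?thesis using True by (simp add: vec_norm2_def)
  next
    case False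
    then have r: "?r > 0" using vec_norm2_nonneg[of n x] by simp
    have "mat_vec n B (\<lambda>i. x i / ?r) = (\<lambda>j. mat_vec n B x j / ?r)"
      unfolding mat_vec_def by (simp add: sum_divide_distrib)
    then have "vec_norm2 n (mat_vec n B x) / ?r \<le> mat_opnorm n B"
      using vec_norm2_mat_vec_le_opnorm[of n "\<lambda>i. x i / ?r" B] r by (simp add: vec_norm2_divide)
    then show ?thesis using r by (simp add: field_simps)
  qed
qed

lemma abs_diag_le_mat_opnorm:
  assumes "i < n"
  shows "\<bar>B i i\<bar> \<le> mat_opnorm n B"
proof -
  let ?e = "\<lambda>k. if k = i then 1 else 0 :: real"
  have "\<bar>B i i\<bar> ^ 2 \<le> (\<Sum>j<n. B j i ^ 2)"
    using assms by (auto intro: member_le_sum)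
  then have "\<bar>B i i\<bar> \<le> sqrt (\<Sum>j<n. B j i ^ 2)"
    by (rule real_le_rsqrt)
  also have "\<dots> = vec_norm2 n (mat_vec n B ?e)"
    unfolding vec_norm2_def by (simp add: mat_vec_unit[OF assms])
  also have "\<dots> \<le> mat_opnorm n B"
    by (rule vec_norm2_mat_vec_le_opnorm) (rule vec_norm2_unit[OF assms])
  finally show ?thesis .
qed

lemma mat_opnorm_nonneg: "n \<ge> 1 \<Longrightarrow> mat_opnorm n B \<ge> 0"
  using abs_diag_le_mat_opnorm[of 0 n B] by simp

lemma mat_bounded_offdiag:
  assumes "n \<ge> 1"
  shows "mat_bounded n (offdiag B) (2 * mat_opnorm n B)"
  unfolding mat_bounded_def
proof
  fix x
  let ?d = "\<lambda>j. - B j j"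
  have eq: "mat_vec n (offdiag B) x j = mat_vec n B x j + ?d j * x j" if "j < n" for j
  proof -
    have "mat_vec n (offdiag B) x j = (\<Sum>k<n. B j k * x k - (if k = j then B j j * x j else 0))"
      unfolding mat_vec_def offdiag_def by (intro sum.cong) auto
    then show ?thesis using that unfolding mat_vec_def by (simp add: sum_subtractf)
  qed
  have "vec_norm2 n (mat_vec n (offdiag B) x) = vec_norm2 n (\<lambda>j. mat_vec n B x j + ?d j * x j)"
    by (rule vec_norm2_cong) (rule eq)
  also have "\<dots> \<le> vec_norm2 n (mat_vec n B x) + vec_norm2 n (\<lambda>j. ?d j * x j)"
    by (rule vec_norm2_add_le)
  also have "\<dots> \<le> mat_opnorm n B * vec_norm2 n x + mat_opnorm n B * vec_norm2 n x"
    using mat_bounded_opnorm[of n B] abs_diag_le_mat_opnorm[of _ n B] unfolding mat_bounded_def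
    by (intro add_mono vec_norm2_mult_le) auto
  finally show "vec_norm2 n (mat_vec n (offdiag B) x) \<le> 2 * mat_opnorm n B * vec_norm2 n x"
    by simp
qed

lemma hollow_sym_offdiag: "symmetric_mat n B \<Longrightarrow> hollow_sym n (offdiag B)"
  unfolding hollow_sym_def symmetric_mat_def offdiag_def by auto

lemma mat_frob_offdiag_le: "mat_frob n (offdiag B) \<le> mat_frob n B"
  unfolding mat_frob_def offdiag_def by (intro real_sqrt_le_mono sum_mono) auto

lemma mat_L1_offdiag_le: "mat_L1 n (offdiag B) \<le> mat_L1 n B"
  unfolding mat_L1_def offdiag_def by (intro sum_mono) auto

text \<open>Since \<open>z\<^sub>i\<^sup>2 = 1\<close> on the cube, the diagonal of \<open>B\<close> contributes exactly \<open>tr B\<close>.\<close>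

lemma quad_form_minus_trace:
  assumes "z \<in> hypercube n"
  shows "quad_form n B z - mat_trace n B = quad_form n (offdiag B) z"
proof -
  have "quad_form n B z
      = (\<Sum>j<n. \<Sum>k<n. z j * offdiag B j k * z k + (if j = k then B j j else 0))"
    unfolding quad_form_def
    using hypercube_square[OF assms] by (intro sum.cong refl) (auto simp: offdiag_def)
  then show ?thesis by (simp add: sum.distrib quad_form_def mat_trace_def)
qed

section \<open>Comparison of a biased distribution with the uniform one\<close>

text \<open>Expanding \<open>(z\<^sup>T A z)\<^sup>l\<close> gives one monomial per tuple \<open>t\<close> of \<open>l\<close> index pairs; on the cube the
  monomial reduces to the product over the indices occurring an odd number of times in \<open>t\<close>.\<close>

definition odd_indices :: "nat \<Rightarrow> (nat \<Rightarrow> nat \<times> nat) \<Rightarrow> nat set" where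
  "odd_indices l t = {i. odd (card {s\<in>{..<l}. fst (t s) = i} + card {s\<in>{..<l}. snd (t s) = i})}"

abbreviation index_tuples :: "nat \<Rightarrow> nat \<Rightarrow> (nat \<Rightarrow> nat \<times> nat) set" where
  "index_tuples n l \<equiv> PiE {..<l} (\<lambda>_. {..<n} \<times> {..<n})"

lemma odd_indices_subset_image:
  "odd_indices l t \<subseteq> (\<lambda>s. fst (t s)) ` {..<l} \<union> (\<lambda>s. snd (t s)) ` {..<l}"
proof
  fix i assume i: "i \<in> odd_indices l t"
  show "i \<in> (\<lambda>s. fst (t s)) ` {..<l} \<union> (\<lambda>s. snd (t s)) ` {..<l}"
  proof (rule ccontr)
    assume "i \<notin> (\<lambda>s. fst (t s)) ` {..<l} \<union> (\<lambda>s. snd (t s)) ` {..<l}"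
    then have "{s\<in>{..<l}. fst (t s) = i} = {}" "{s\<in>{..<l}. snd (t s) = i} = {}" by auto
    then show False using i unfolding odd_indices_def by (simp only: mem_Collect_eq card.empty) simp
  qed
qed

lemma odd_indices_subset: "t \<in> index_tuples n l \<Longrightarrow> odd_indices l t \<subseteq> {..<n}"
  using odd_indices_subset_image[of l t] by (force simp: PiE_def Pi_def mem_Times_iff)

lemma card_odd_indices_le: "card (odd_indices l t) \<le> 2 * l"
proof -
  have "card (odd_indices l t) \<le> card ((\<lambda>s. fst (t s)) ` {..<l} \<union> (\<lambda>s. snd (t s)) ` {..<l})"
    by (intro card_mono odd_indices_subset_image) auto
  also have "\<dots> \<le> card ((\<lambda>s. fst (t s)) ` {..<l}) + card ((\<lambda>s. snd (t s)) ` {..<l})"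
    by (rule card_Un_le)
  also have "\<dots> \<le> l + l"
    by (intro add_mono) (auto intro: card_image_le[THEN order_trans])
  finally show ?thesis by simp
qed

lemma prod_eq_prod_power_card:
  fixes z :: "nat \<Rightarrow> real" and g :: "nat \<Rightarrow> nat"
  assumes "\<And>s. s < l \<Longrightarrow> g s < n"
  shows "(\<Prod>s<l. z (g s)) = (\<Prod>i<n. z i ^ card {s\<in>{..<l}. g s = i})"
proof -
  have "(\<Prod>i<n. \<Prod>s\<in>{s\<in>{..<l}. g s = i}. z (g s)) = (\<Prod>s<l. z (g s))"
    using assms by (intro prod.group) auto
  then have "(\<Prod>s<l. z (g s)) = (\<Prod>i<n. \<Prod>s\<in>{s\<in>{..<l}. g s = i}. z (g s))" ..
  also have "\<dots> = (\<Prod>i<n. z i ^ card {s\<in>{..<l}. g s = i})"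
    by (intro prod.cong refl) simp
  finally show ?thesis .
qed

lemma prod_hypercube_eq_prod_odd_indices:
  assumes z: "z \<in> hypercube n" and t: "t \<in> index_tuples n l"
  shows "(\<Prod>s<l. z (fst (t s)) * z (snd (t s))) = (\<Prod>i\<in>odd_indices l t. z i)"
proof -
  let ?a = "\<lambda>i. card {s\<in>{..<l}. fst (t s) = i}" and ?b = "\<lambda>i. card {s\<in>{..<l}. snd (t s) = i}"
  have range: "fst (t s) < n" "snd (t s) < n" if "s < l" for s
    using t that by (auto simp: PiE_def Pi_def mem_Times_iff)
  have "(\<Prod>s<l. z (fst (t s)) * z (snd (t s))) = (\<Prod>i<n. z i ^ ?a i) * (\<Prod>i<n. z i ^ ?b i)"
    using prod_eq_prod_power_card[of l "\<lambda>s. fst (t s)" n z]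
      prod_eq_prod_power_card[of l "\<lambda>s. snd (t s)" n z] range
    by (simp add: prod.distrib)
  also have "\<dots> = (\<Prod>i<n. if odd (?a i + ?b i) then z i else 1)"
    unfolding prod.distrib[symmetric] power_add[symmetric]
    by (intro prod.cong refl) (simp add: power_eq_if_square_eq_1[OF hypercube_square[OF z]])
  also have "\<dots> = (\<Prod>i\<in>{i\<in>{..<n}. odd (?a i + ?b i)}. z i)"
    by (rule prod.inter_filter[symmetric]) simp
  also have "{i\<in>{..<n}. odd (?a i + ?b i)} = odd_indices l t"
    using odd_indices_subset[OF t] unfolding odd_indices_def by blast
  finally show ?thesis .
qed

lemma quad_form_power_eq_sum_odd_indices:
  assumes "z \<in> hypercube n"
  shows "quad_form n A z ^ l = (\<Sum>t\<in>index_tuples n l.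
      (\<Prod>s<l. A (fst (t s)) (snd (t s))) * (\<Prod>i\<in>odd_indices l t. z i))"
proof -
  let ?f = "\<lambda>q. A (fst q) (snd q) * (z (fst q) * z (snd q))"
  have "quad_form n A z = (\<Sum>q\<in>{..<n} \<times> {..<n}. ?f q)"
    unfolding quad_form_def by (simp add: sum.cartesian_product case_prod_beta algebra_simps)
  then have "quad_form n A z ^ l = (\<Prod>s<l. \<Sum>q\<in>{..<n} \<times> {..<n}. ?f q)" by simp
  also have "\<dots> = (\<Sum>t\<in>index_tuples n l. \<Prod>s<l. ?f (t s))"
    by (rule prod_sum_PiE) auto
  also have "\<dots> = (\<Sum>t\<in>index_tuples n l.
      (\<Prod>s<l. A (fst (t s)) (snd (t s))) * (\<Prod>i\<in>odd_indices l t. z i))"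
    by (intro sum.cong refl, subst prod.distrib)
      (simp only: prod_hypercube_eq_prod_odd_indices[OF assms])
  finally show ?thesis .
qed

lemma sum_index_tuples_abs_prod: "(\<Sum>t\<in>index_tuples n l. \<bar>\<Prod>s<l. A (fst (t s)) (snd (t s))\<bar>) = mat_L1 n A ^ l"
proof -
  have "mat_L1 n A = (\<Sum>q\<in>{..<n} \<times> {..<n}. \<bar>A (fst q) (snd q)\<bar>)"
    unfolding mat_L1_def by (simp add: sum.cartesian_product case_prod_beta)
  then have "mat_L1 n A ^ l = (\<Prod>s<l. \<Sum>q\<in>{..<n} \<times> {..<n}. \<bar>A (fst q) (snd q)\<bar>)" by simp
  also have "\<dots> = (\<Sum>t\<in>index_tuples n l. \<Prod>s<l. \<bar>A (fst (t s)) (snd (t s))\<bar>)"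
    by (rule prod_sum_PiE) auto
  finally show ?thesis by (simp add: abs_prod)
qed

lemma expectation_eq_sum_hypercube:
  "set_pmf D \<subseteq> hypercube n \<Longrightarrow>
    measure_pmf.expectation D f = (\<Sum>z\<in>hypercube n. f z * pmf D z)"
  by (rule integral_measure_pmf_real[OF finite_hypercube]) auto

lemma expectation_monomial_bias:
  assumes D: "eps_biased_indep n eps m D" and "eps \<ge> 0" "S \<subseteq> {..<n}" "card S \<le> m"
  shows "\<bar>measure_pmf.expectation D (\<lambda>z. \<Prod>i\<in>S. z i)
      - (\<Sum>z\<in>hypercube n. \<Prod>i\<in>S. z i) / card (hypercube n)\<bar> \<le> eps"
proof (cases "S = {}")
  case True
  then show ?thesis using assms(2) card_hypercube_pos[of n] by simp
next
  case False
  then obtain i where "i \<in> S" by blast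
  then have "(\<Sum>z\<in>hypercube n. \<Prod>i\<in>S. z i) = 0"
    using assms(3) by (rule sum_hypercube_prod_eq_0)
  moreover have "\<bar>measure_pmf.expectation D (\<lambda>z. \<Prod>i\<in>S. z i)\<bar> \<le> eps"
    using D False assms(3,4) unfolding eps_biased_indep_def atLeast0LessThan by blast
  ultimately show ?thesis by simp
qed

text \<open>Each monomial of degree at most \<open>2l\<close> has bias at most \<open>\<epsilon>\<close>, and the coefficients of the
  expansion have total mass \<open>\<parallel>A\<parallel>\<^sub>L\<^sub>1\<^sup>l\<close>.\<close>

lemma expectation_quad_form_power_le:
  assumes D: "eps_biased_indep n eps (2 * l) D" and eps: "eps \<ge> 0"
  shows "measure_pmf.expectation D (\<lambda>z. quad_form n A z ^ l)
    \<le> (\<Sum>z\<in>hypercube n. quad_form n A z ^ l) / card (hypercube n) + eps * mat_L1 n A ^ l"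
proof -
  let ?H = "hypercube n" and ?T = "index_tuples n l"
  let ?c = "\<lambda>t. \<Prod>s<l. A (fst (t s)) (snd (t s))"
  let ?\<chi> = "\<lambda>t z. \<Prod>i\<in>odd_indices l t. z i"
  define N where "N = real (card ?H)"
  have supp: "set_pmf D \<subseteq> ?H" using D unfolding eps_biased_indep_def by blast
  have expand: "(\<Sum>z\<in>?H. quad_form n A z ^ l * w z) = (\<Sum>t\<in>?T. ?c t * (\<Sum>z\<in>?H. ?\<chi> t z * w z))"
    for w :: "(nat \<Rightarrow> real) \<Rightarrow> real"
  proof -
    have "(\<Sum>z\<in>?H. quad_form n A z ^ l * w z) = (\<Sum>z\<in>?H. \<Sum>t\<in>?T. ?c t * (?\<chi> t z * w z))"
      by (intro sum.cong refl)
        (simp add: quad_form_power_eq_sum_odd_indices sum_distrib_right mult.assoc)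
    also have "\<dots> = (\<Sum>t\<in>?T. ?c t * (\<Sum>z\<in>?H. ?\<chi> t z * w z))"
      by (subst sum.swap) (simp add: sum_distrib_left)
    finally show ?thesis .
  qed
  define e where "e t = measure_pmf.expectation D (?\<chi> t)" for t
  define u where "u t = (\<Sum>z\<in>?H. ?\<chi> t z) / N" for t
  have E: "measure_pmf.expectation D (\<lambda>z. quad_form n A z ^ l) = (\<Sum>t\<in>?T. ?c t * e t)"
    unfolding e_def expectation_eq_sum_hypercube[OF supp] by (rule expand)
  have U: "(\<Sum>z\<in>?H. quad_form n A z ^ l) / N = (\<Sum>t\<in>?T. ?c t * u t)"
    using expand[of "\<lambda>_. 1 / N"] unfolding u_def by (simp add: sum_divide_distrib)
  have bias: "(\<Sum>t\<in>?T. ?c t * (e t - u t)) \<le> (\<Sum>t\<in>?T. \<bar>?c t\<bar> * eps)"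
  proof (rule sum_mono)
    fix t assume t: "t \<in> ?T"
    have "\<bar>e t - u t\<bar> \<le> eps"
      unfolding e_def u_def N_def
      by (rule expectation_monomial_bias[OF D eps odd_indices_subset[OF t] card_odd_indices_le])
    then have "\<bar>?c t * (e t - u t)\<bar> \<le> \<bar>?c t\<bar> * eps"
      unfolding abs_mult by (rule mult_left_mono) simp
    then show "?c t * (e t - u t) \<le> \<bar>?c t\<bar> * eps" by linarith
  qed
  have "measure_pmf.expectation D (\<lambda>z. quad_form n A z ^ l)
      = (\<Sum>z\<in>?H. quad_form n A z ^ l) / N + (\<Sum>t\<in>?T. ?c t * (e t - u t))"
    unfolding E U by (simp add: right_diff_distrib sum_subtractf)
  also have "\<dots> \<le> (\<Sum>z\<in>?H. quad_form n A z ^ l) / N + eps * mat_L1 n A ^ l"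
    using bias sum_distrib_right[of "\<lambda>t. \<bar>?c t\<bar>" ?T eps, symmetric]
    by (simp add: sum_index_tuples_abs_prod mult.commute)
  finally show ?thesis unfolding N_def .
qed

lemma expectation_quad_form_trace_power_le:
  assumes n: "n \<ge> 1" and eps: "eps \<ge> 0" and l: "l = 2^k"
    and D: "eps_biased_indep n eps (2 * l) D" and B: "symmetric_mat n B"
  shows "measure_pmf.expectation D (\<lambda>z. (quad_form n B z - mat_trace n B) ^ l)
    \<le> eps * mat_L1 n B ^ l
      + 32 ^ l * max (sqrt (real l) * mat_frob n B) (real l * mat_opnorm n B) ^ l"
proof -
  let ?A = "offdiag B" and ?H = "hypercube n"
  let ?M = "max (sqrt (real l) * mat_frob n B) (real l * mat_opnorm n B)"
  define N where "N = real (card ?H)"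
  have N: "N > 0" unfolding N_def using card_hypercube_pos by simp
  have supp: "set_pmf D \<subseteq> ?H" using D unfolding eps_biased_indep_def by blast
  have op: "mat_opnorm n B \<ge> 0" by (rule mat_opnorm_nonneg[OF n])
  have "max (sqrt (real l) * mat_frob n ?A) (real l * (2 * mat_opnorm n B)) \<le> 2 * ?M"
  proof -
    have "sqrt (real l) * mat_frob n ?A \<le> sqrt (real l) * mat_frob n B"
      by (intro mult_left_mono mat_frob_offdiag_le) simp
    moreover have "0 \<le> sqrt (real l) * mat_frob n B" "0 \<le> real l * mat_opnorm n B"
      using op mat_frob_nonneg[of n B] by simp_all
    ultimately show ?thesis by (auto simp: max_def)
  qed
  then have "max (sqrt (real l) * mat_frob n ?A) (real l * (2 * mat_opnorm n B)) ^ l \<le> (2 * ?M) ^ l"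
    by (rule power_mono) (simp add: le_max_iff_disj op)
  then have "N * 16^l * max (sqrt (real l) * mat_frob n ?A) (real l * (2 * mat_opnorm n B)) ^ l
      \<le> N * 16^l * (2 * ?M) ^ l"
    by (rule mult_left_mono) (use N in simp)
  moreover have "(\<Sum>z\<in>?H. quad_form n ?A z ^ l)
      \<le> N * 16^l * max (sqrt (real l) * mat_frob n ?A) (real l * (2 * mat_opnorm n B)) ^ l"
    using sum_hypercube_moment_two_power_le[OF hollow_sym_offdiag[OF B] mat_bounded_offdiag[OF n], of k]
      op unfolding N_def l by simp
  ultimately have "(\<Sum>z\<in>?H. quad_form n ?A z ^ l) \<le> N * 16^l * (2 * ?M) ^ l"
    by (rule order_trans[rotated])
  then have "(\<Sum>z\<in>?H. quad_form n ?A z ^ l) / N \<le> 16^l * (2 * ?M) ^ l"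
    by (subst pos_divide_le_eq[OF N]) (simp only: mult.commute mult.assoc)
  also have "\<dots> = 32 ^ l * ?M ^ l"
    by (simp add: power_mult_distrib mult.assoc[symmetric] flip: power_mult_distrib[of 16 2])
  finally have uniform: "(\<Sum>z\<in>?H. quad_form n ?A z ^ l) / N \<le> 32 ^ l * ?M ^ l" .
  have L1: "mat_L1 n ?A ^ l \<le> mat_L1 n B ^ l"
    by (intro power_mono mat_L1_offdiag_le) (simp add: mat_L1_def sum_nonneg)
  have "measure_pmf.expectation D (\<lambda>z. (quad_form n B z - mat_trace n B) ^ l)
      = measure_pmf.expectation D (\<lambda>z. quad_form n ?A z ^ l)"
    unfolding expectation_eq_sum_hypercube[OF supp] by (simp add: quad_form_minus_trace)
  also have "\<dots> \<le> (\<Sum>z\<in>?H. quad_form n ?A z ^ l) / N + eps * mat_L1 n ?A ^ l"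
    unfolding N_def by (rule expectation_quad_form_power_le[OF D eps])
  also have "\<dots> \<le> 32 ^ l * ?M ^ l + eps * mat_L1 n B ^ l"
    using uniform L1 eps by (intro add_mono mult_left_mono)
  finally show ?thesis by simp
qed

theorem lemma3:
  "\<exists>C>0. \<forall>(n::nat) (eps::real) (l::nat) D (B::nat \<Rightarrow> nat \<Rightarrow> real).
     n \<ge> 1 \<longrightarrow> eps \<ge> 0 \<longrightarrow> l \<ge> 2 \<longrightarrow> (\<exists>k::nat. l = 2 ^ k) \<longrightarrow>
     eps_biased_indep n eps (2 * l) D \<longrightarrow>
     (\<forall>i<n. \<forall>j<n. B i j = B j i) \<longrightarrow>
     measure_pmf.expectation D (\<lambda>z. (quad_form n B z - mat_trace n B) ^ l)
       \<le> eps * mat_L1 n B ^ l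
         + C ^ l * (max (sqrt (real l) * mat_frob n B) (real l * mat_opnorm n B)) ^ l"
proof (intro exI[of _ 32] conjI allI impI)
  fix n eps l D and B :: "nat \<Rightarrow> nat \<Rightarrow> real"
  assume "n \<ge> 1" "eps \<ge> 0" "l \<ge> 2" "\<exists>k::nat. l = 2 ^ k" "eps_biased_indep n eps (2 * l) D"
    "\<forall>i<n. \<forall>j<n. B i j = B j i"
  then show "measure_pmf.expectation D (\<lambda>z. (quad_form n B z - mat_trace n B) ^ l)
      \<le> eps * mat_L1 n B ^ l
        + 32 ^ l * (max (sqrt (real l) * mat_frob n B) (real l * mat_opnorm n B)) ^ l"
    by (elim exE) (rule expectation_quad_form_trace_power_le; simp add: symmetric_mat_def)
qed simp

end
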